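(* Let $g_y(\omega)=\frac{\sigma_\epsilon^2}{2\pi}|\kappa(e^{i\omega})|^2$ be the spectral density of an invertible ARMA process, i.e. $\sigma_\epsilon^2>0$ and $\kappa(z)=\eta(z)/\phi(z)$ where $\eta,\phi$ are polynomials with no common zeros, all of whose zeros lie in $\{|z|>1\}$, normalized so that $\kappa(0)=1$. For $\beta\in[0,1]$ and $\theta\in(-1,1)$ let $$f(\theta,\beta)=-\int_{-\pi}^{\pi}\frac{e^{i\omega}+\beta\theta}{|(1+\theta e^{i\omega})(1+\beta\theta e^{i\omega})|^2}\,g_y(\omega)\,d\omega .$$ Then for each $\beta\in[0,1]$ the set $\Theta_0^\beta=\{\theta\in(-1,1): f(\theta,\beta)=0\}$ is finite. *)

theory Defs
  imports "HOL-Analysis.Analysis" "HOL-Computational_Algebra.Polynomial"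
begin

definition arma_kappa :: "real poly \<Rightarrow> real poly \<Rightarrow> complex \<Rightarrow> complex" where
  "arma_kappa eta phi z = poly (map_poly complex_of_real eta) z / poly (map_poly complex_of_real phi) z"

definition arma_spec :: "real \<Rightarrow> real poly \<Rightarrow> real poly \<Rightarrow> real \<Rightarrow> real" where
  "arma_spec s2 eta phi \<omega> = s2 / (2 * pi) * (cmod (arma_kappa eta phi (cis \<omega>)))\<^sup>2"

definition invertible_arma :: "real \<Rightarrow> real poly \<Rightarrow> real poly \<Rightarrow> bool" where
  "invertible_arma s2 eta phi \<longleftrightarrow>
     s2 > 0 \<and>
     (\<forall>z. \<not> (poly (map_poly complex_of_real eta) z = 0 \<and> poly (map_poly complex_of_real phi) z = 0)) \<and>
     (\<forall>z. poly (map_poly complex_of_real eta) z = 0 \<longrightarrow> cmod z > 1) \<and>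
     (\<forall>z. poly (map_poly complex_of_real phi) z = 0 \<longrightarrow> cmod z > 1) \<and>
     arma_kappa eta phi 0 = 1"

definition f_crit :: "(real \<Rightarrow> real) \<Rightarrow> real \<Rightarrow> real \<Rightarrow> complex" where
  "f_crit g \<theta> \<beta> = - integral {-pi..pi}
     (\<lambda>\<omega>. (cis \<omega> + complex_of_real (\<beta> * \<theta>)) /
           complex_of_real ((cmod ((1 + complex_of_real \<theta> * cis \<omega>) * (1 + complex_of_real (\<beta> * \<theta>) * cis \<omega>)))\<^sup>2)
           * complex_of_real (g \<omega>))"

end

theory Submission
  imports Defs "HOL-Complex_Analysis.Complex_Analysis"
begin

text \<open>On the unit circle \<open>|1 + \<theta> z|\<^sup>2 = (1 + \<theta> z)(z + \<theta>)/z\<close> and \<open>|\<kappa>(z)|\<^sup>2 = \<kappa>(z) \<kappa>(1/z)\<close>, so with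
  \<open>G(z) = \<sigma>\<^sup>2/(2\<pi>) \<kappa>(z) \<kappa>(1/z)\<close> the function \<open>f(\<theta>, \<beta>)\<close> is \<open>i\<close> times the contour integral
  \<open>\<Psi>(\<theta>)\<close> of \<open>z G(z) / ((1 + \<theta> z)(1 + \<beta>\<theta> z)(z + \<theta>))\<close> over \<open>|z| = 1\<close>. This is holomorphic
  in \<open>\<theta>\<close> on the unit disc, so its real zeros are finite unless they accumulate at \<open>\<plusminus>1\<close>.
  For \<open>|\<theta>|\<close> close to 1 the residue theorem gives
  \<open>\<Psi>(\<theta>) = \<Phi>(\<theta>) - 2\<pi>i \<theta> G(-\<theta>) / ((1 - \<theta>\<^sup>2)(1 - \<beta>\<theta>\<^sup>2))\<close>, where \<open>\<Phi>\<close> is the same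
  integral over a circle enclosing only the poles of \<open>G\<close> inside the disc, and \<open>\<Phi>\<close> is continuous
  at \<open>\<plusminus>1\<close>. As \<open>G(\<plusminus>1) \<noteq> 0\<close>, the pole term dominates and \<open>\<Psi>\<close> has no zeros near \<open>\<plusminus>1\<close>.\<close>

section \<open>Integrals over circles\<close>

lemma shiftpath_circlepath_half:
  "shiftpath (1/2) (circlepath z r) = part_circlepath z r (-pi) pi"
proof
  fix x :: real
  have line: "linepath (-pi) pi x = 2 * pi * x - pi" "linepath 0 (2 * pi) y = 2 * pi * y" for y
    by (simp_all add: linepath_def algebra_simps)
  have "exp (\<i> * of_real (pi + a)) = exp (\<i> * of_real (a - pi))" for a :: real
    by (simp add: distrib_left right_diff_distrib exp_add exp_diff)
  from this[of "2 * pi * x"] show "shiftpath (1/2) (circlepath z r) x = part_circlepath z r (-pi) pi x"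
    by (auto simp: shiftpath_alt_def circlepath_def part_circlepath_def line algebra_simps)
qed

lemma contour_integral_circlepath_eq:
  "contour_integral (circlepath 0 r) f = integral {-pi..pi} (\<lambda>t. f (r * cis t) * r * \<i> * cis t)"
proof -
  have "contour_integral (circlepath 0 r) f = contour_integral (shiftpath (1/2) (circlepath 0 r)) f"
    by (simp add: contour_integral_shiftpath)
  also have "\<dots> = integral {-pi..pi} (\<lambda>t. f (r * cis t) * r * \<i> * cis t)"
    by (simp add: shiftpath_circlepath_half contour_integral_part_circlepath_eq)
  finally show ?thesis .
qed

lemma contour_integral_circlepath_diff_residue:
  fixes f :: "complex \<Rightarrow> complex"
  assumes hol: "f holomorphic_on ball 0 R - insert a S" and S: "finite S" "S \<subseteq> ball 0 \<rho>\<^sub>2"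
    and radii: "0 \<le> \<rho>\<^sub>2" "\<rho>\<^sub>2 < norm a" "norm a < \<rho>\<^sub>1" "\<rho>\<^sub>1 < R"
  shows "contour_integral (circlepath 0 \<rho>\<^sub>1) f - contour_integral (circlepath 0 \<rho>\<^sub>2) f =
    2 * pi * \<i> * residue f a"
proof -
  have "a \<notin> S"
    using S radii by auto
  have residues: "contour_integral (circlepath 0 \<rho>) f =
      2 * pi * \<i> * (winding_number (circlepath 0 \<rho>) a * residue f a + (\<Sum>p\<in>S. residue f p))"
    if "\<rho>\<^sub>2 \<le> \<rho>" "\<rho> < R" "\<rho> \<noteq> norm a" for \<rho>
  proof -
    have "contour_integral (circlepath 0 \<rho>) f =
        2 * pi * \<i> * (\<Sum>p\<in>insert a S. winding_number (circlepath 0 \<rho>) p * residue f p)"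
    proof (rule Residue_theorem[OF _ _ _ hol])
      show "path_image (circlepath 0 \<rho>) \<subseteq> ball 0 R - insert a S"
        using that S radii by auto
      show "\<forall>z. z \<notin> ball 0 R \<longrightarrow> winding_number (circlepath 0 \<rho>) z = 0"
        using that radii by (auto intro!: winding_number_zero_outside[of _ "cball 0 \<rho>"])
    qed (use S in auto)
    moreover have "winding_number (circlepath 0 \<rho>) p = 1" if "p \<in> S" for p
      using that S \<open>\<rho>\<^sub>2 \<le> \<rho>\<close> by (intro winding_number_circlepath) auto
    ultimately show ?thesis
      using S \<open>a \<notin> S\<close> by simp
  qed
  have "winding_number (circlepath 0 \<rho>\<^sub>1) a = 1"
    using radii by (intro winding_number_circlepath) auto
  moreover have "winding_number (circlepath 0 \<rho>\<^sub>2) a = 0"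
    using radii by (intro winding_number_zero_outside[of _ "cball 0 \<rho>\<^sub>2"]) auto
  ultimately show ?thesis
    using residues[of \<rho>\<^sub>1] residues[of \<rho>\<^sub>2] radii by (simp add: algebra_simps)
qed

lemma continuous_on_circle_param:
  fixes F :: "'a::topological_space \<Rightarrow> complex \<Rightarrow> complex"
  assumes "continuous_on (U \<times> sphere 0 \<rho>) (\<lambda>(\<theta>, z). F \<theta> z)" "0 \<le> \<rho>" "V \<subseteq> U"
  shows "continuous_on (V \<times> cbox (-pi) pi) (\<lambda>(\<theta>, t). F \<theta> (\<rho> * cis t) * \<rho> * \<i> * cis t)"
proof -
  have "continuous_on (V \<times> cbox (-pi) pi) (\<lambda>p. (\<lambda>(\<theta>, z). F \<theta> z) (fst p, \<rho> * cis (snd p)))"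
    by (rule continuous_on_compose2[OF assms(1)])
      (use assms in \<open>auto intro!: continuous_intros simp: norm_mult\<close>)
  then show ?thesis
    by (auto simp: case_prod_beta intro!: continuous_intros)
qed

lemma holomorphic_on_contour_integral_circlepath_param:
  fixes F F' :: "complex \<Rightarrow> complex \<Rightarrow> complex"
  assumes "open U" "0 \<le> \<rho>"
    and deriv: "\<And>\<theta> z. \<theta> \<in> U \<Longrightarrow> z \<in> sphere 0 \<rho> \<Longrightarrow> ((\<lambda>\<theta>. F \<theta> z) has_field_derivative F' \<theta> z) (at \<theta>)"
    and cont: "continuous_on (U \<times> sphere 0 \<rho>) (\<lambda>(\<theta>, z). F \<theta> z)"
    and cont': "continuous_on (U \<times> sphere 0 \<rho>) (\<lambda>(\<theta>, z). F' \<theta> z)"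
  shows "(\<lambda>\<theta>. contour_integral (circlepath 0 \<rho>) (F \<theta>)) holomorphic_on U"
proof -
  \<comment> \<open>\<open>leibniz_rule_holomorphic\<close> needs a convex domain, so it is applied on balls inside \<open>U\<close>.\<close>
  have local: "(\<lambda>\<theta>. integral (cbox (-pi) pi) (\<lambda>t. F \<theta> (\<rho> * cis t) * \<rho> * \<i> * cis t))
      holomorphic_on ball \<theta>\<^sub>0 e"
    if "ball \<theta>\<^sub>0 e \<subseteq> U" for \<theta>\<^sub>0 e
  proof (rule leibniz_rule_holomorphic)
    fix \<theta> t assume "\<theta> \<in> ball \<theta>\<^sub>0 e" "t \<in> cbox (-pi) pi"
    then show "((\<lambda>\<theta>. F \<theta> (\<rho> * cis t) * \<rho> * \<i> * cis t) has_field_derivative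
        F' \<theta> (\<rho> * cis t) * \<rho> * \<i> * cis t) (at \<theta> within ball \<theta>\<^sub>0 e)"
    proof -
      have "((\<lambda>\<theta>. F \<theta> (\<rho> * cis t)) has_field_derivative F' \<theta> (\<rho> * cis t)) (at \<theta>)"
        using that \<open>\<theta> \<in> ball \<theta>\<^sub>0 e\<close> \<open>t \<in> cbox (-pi) pi\<close> \<open>0 \<le> \<rho>\<close>
        by (intro deriv) (auto simp: norm_mult)
      from DERIV_cmult_right[OF this, of "\<rho> * \<i> * cis t"] show ?thesis
        by (simp add: mult.assoc has_field_derivative_at_within)
    qed
  next
    fix \<theta> assume "\<theta> \<in> ball \<theta>\<^sub>0 e"
    then have "continuous_on (sphere 0 \<rho>) (F \<theta>)"
      using that by (intro continuous_on_compose2[OF cont, of _ "\<lambda>z. (\<theta>, z)", simplified]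
          continuous_on_Pair continuous_on_const continuous_on_id) auto
    then have "continuous_on (cbox (-pi) pi) (\<lambda>t. F \<theta> (\<rho> * cis t) * \<rho> * \<i> * cis t)"
      using \<open>0 \<le> \<rho>\<close>
      by (intro continuous_intros continuous_on_compose2[OF \<open>continuous_on (sphere 0 \<rho>) (F \<theta>)\<close>])
        (auto simp: norm_mult)
    then show "(\<lambda>t. F \<theta> (\<rho> * cis t) * \<rho> * \<i> * cis t) integrable_on cbox (-pi) pi"
      by (rule integrable_continuous)
  next
    show "continuous_on (ball \<theta>\<^sub>0 e \<times> cbox (-pi) pi)
        (\<lambda>(\<theta>, t). F' \<theta> (\<rho> * cis t) * \<rho> * \<i> * cis t)"
      using that by (intro continuous_on_circle_param[OF cont' \<open>0 \<le> \<rho>\<close>])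
  qed simp
  have "(\<lambda>\<theta>. contour_integral (circlepath 0 \<rho>) (F \<theta>)) holomorphic_on ball \<theta>\<^sub>0 e"
    if "ball \<theta>\<^sub>0 e \<subseteq> U" for \<theta>\<^sub>0 e
    using local[OF that] by (simp only: contour_integral_circlepath_eq cbox_interval)
  then show ?thesis
    using \<open>open U\<close> unfolding holomorphic_on_open[OF \<open>open U\<close>]
    by (metis openE centre_in_ball open_ball holomorphic_on_imp_differentiable_at field_differentiable_def)
qed

lemma finite_real_zeros_in_unit_disc:
  fixes f :: "complex \<Rightarrow> complex"
  assumes hol: "f holomorphic_on ball 0 1"
    and ends: "eventually (\<lambda>z. f z \<noteq> 0) (at 1 within ball 0 1)"
      "eventually (\<lambda>z. f z \<noteq> 0) (at (-1) within ball 0 1)"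
  shows "finite {x \<in> {-1<..<1}. f (of_real x) = 0}"
proof -
  obtain d\<^sub>1 d\<^sub>2 where d\<^sub>1: "d\<^sub>1 > 0" "\<And>z. z \<in> ball 0 1 \<Longrightarrow> dist z 1 < d\<^sub>1 \<Longrightarrow> f z \<noteq> 0"
    and d\<^sub>2: "d\<^sub>2 > 0" "\<And>z. z \<in> ball 0 1 \<Longrightarrow> dist z (-1) < d\<^sub>2 \<Longrightarrow> f z \<noteq> 0"
    using ends unfolding eventually_at by (metis dist_0_norm mem_ball norm_minus_cancel norm_one order.irrefl)
  define d where "d = min 1 (min d\<^sub>1 d\<^sub>2)"
  have d: "0 < d" "d \<le> 1"
    using d\<^sub>1 d\<^sub>2 by (auto simp: d_def)
  have near: "f (of_real x) \<noteq> 0" if "1 - d < \<bar>x\<bar>" "\<bar>x\<bar> < 1" for x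
  proof -
    have dist: "dist (complex_of_real x) (of_real c) = \<bar>x - c\<bar>" for c
      by (simp add: dist_real_def)
    show ?thesis
    proof (cases "x \<ge> 0")
      case True
      then show ?thesis
        using that dist[of 1] by (intro d\<^sub>1(2)) (auto simp: d_def)
    next
      case False
      then show ?thesis
        using that dist[of "-1"] by (intro d\<^sub>2(2)) (auto simp: d_def)
    qed
  qed
  let ?Z = "{x \<in> {-1<..<1}. f (of_real x) = 0}"
  have "of_real ` ?Z \<subseteq> {z \<in> cball 0 (1 - d). f z = 0}"
    using near by force
  moreover have "finite {z \<in> cball 0 (1 - d). f z = 0}"
  proof (cases "f constant_on ball 0 1")
    case True
    then obtain k where k: "\<And>z. z \<in> ball 0 1 \<Longrightarrow> f z = k"
      by (auto simp: constant_on_def)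
    have "f (of_real (1 - d / 2)) \<noteq> 0"
      using d by (intro near) auto
    moreover have "of_real (1 - d / 2) \<in> ball (0::complex) 1"
      using d by (simp only: mem_ball dist_0_norm norm_of_real)
    ultimately have "k \<noteq> 0"
      using k by auto
    then have "{z \<in> cball 0 (1 - d). f z = 0} = {}"
      using d k by auto
    then show ?thesis
      by (metis finite.emptyI)
  next
    case False
    then show ?thesis
      using d by (intro holomorphic_compact_finite_zeros[OF hol]) auto
  qed
  ultimately show ?thesis
    by (metis (no_types, lifting) finite_subset finite_imageD inj_of_real inj_on_subset subset_UNIV)
qed


section \<open>The critical integral\<close>

definition crit_denom :: "real \<Rightarrow> complex \<Rightarrow> complex \<Rightarrow> complex" where
  "crit_denom \<beta> \<theta> z = (1 + \<theta> * z) * (1 + of_real \<beta> * \<theta> * z) * (z + \<theta>)"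

text \<open>For \<open>\<rho> = 1\<close> this is the integral in \<^const>\<open>f_crit\<close> after the substitution \<open>z = e\<^sup>i\<^sup>\<omega>\<close>,
  see \<open>f_crit_eq_crit_integral\<close>; other radii serve to isolate the pole at \<open>-\<theta>\<close>.\<close>
definition crit_integral :: "real \<Rightarrow> (complex \<Rightarrow> complex) \<Rightarrow> real \<Rightarrow> complex \<Rightarrow> complex" where
  "crit_integral \<beta> G \<rho> \<theta> = contour_integral (circlepath 0 \<rho>) (\<lambda>z. z * G z / crit_denom \<beta> \<theta> z)"

lemma one_plus_nonzero_if_norm_less_1:
  fixes w :: "'a::real_normed_field"
  shows "norm w < 1 \<Longrightarrow> 1 + w \<noteq> 0"
  by (metis add_eq_0_iff norm_minus_cancel norm_one order.irrefl)

lemma crit_denom_factors_nonzero: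
  fixes \<theta> z :: complex
  assumes "\<beta> \<in> {0..1}" "norm \<theta> * norm z < 1"
  shows "1 + \<theta> * z \<noteq> 0" "1 + of_real \<beta> * \<theta> * z \<noteq> 0"
proof -
  have "norm (of_real \<beta> * \<theta> * z) \<le> norm (\<theta> * z)"
    using assms(1) by (simp add: norm_mult mult_left_le_one_le mult.assoc abs_of_nonneg)
  then show "1 + \<theta> * z \<noteq> 0" "1 + of_real \<beta> * \<theta> * z \<noteq> 0"
    using assms(2) by (auto simp: norm_mult intro!: one_plus_nonzero_if_norm_less_1)
qed

lemma crit_denom_nonzero:
  assumes "\<beta> \<in> {0..1}" "norm \<theta> * norm z < 1" "z \<noteq> -\<theta>"
  shows "crit_denom \<beta> \<theta> z \<noteq> 0"
  using crit_denom_factors_nonzero[OF assms(1,2)] assms(3)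
  by (auto simp: crit_denom_def add_eq_0_iff2)

lemma crit_weight_on_unit_circle:
  assumes "norm z = 1" "\<bar>\<theta>\<bar> < 1" "\<beta> \<in> {0..1}"
  shows "(z + of_real (\<beta> * \<theta>)) /
      of_real ((cmod ((1 + of_real \<theta> * z) * (1 + of_real (\<beta> * \<theta>) * z)))\<^sup>2) =
    z * z / crit_denom \<beta> (of_real \<theta>) z"
proof -
  have "z \<noteq> 0"
    using assms(1) by auto
  have "cnj z = 1 / z"
    using complex_norm_square[of z] assms(1) \<open>z \<noteq> 0\<close> by (simp add: field_simps)
  have "\<bar>\<beta> * \<theta>\<bar> < 1"
    using assms(2,3) by (auto simp: abs_mult intro: le_less_trans[OF mult_left_le_one_le])
  then have nonzero: "z + of_real \<theta> \<noteq> 0" "z + of_real (\<beta> * \<theta>) \<noteq> 0"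
    using assms(1,2) by (auto simp: add_eq_0_iff2 norm_mult abs_mult)
  have "norm (complex_of_real \<theta>) * norm z < 1"
    using assms(1,2) by simp
  note factors = crit_denom_factors_nonzero[OF assms(3) this]
  have norm_sq: "complex_of_real ((cmod ((1 + of_real \<theta> * z) * (1 + of_real (\<beta> * \<theta>) * z)))\<^sup>2) =
      (1 + of_real \<theta> * z) * (1 + of_real (\<beta> * \<theta>) * z) *
      ((z + of_real \<theta>) / z) * ((z + of_real (\<beta> * \<theta>)) / z)"
    unfolding complex_norm_square using \<open>z \<noteq> 0\<close> by (simp add: \<open>cnj z = 1 / z\<close> field_simps)
  have cancel: "q / (a * b * (p / z) * (q / z)) = z * z / (a * b * p)"
    if "a \<noteq> 0" "b \<noteq> 0" "p \<noteq> 0" "q \<noteq> 0" for a b p q :: complex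
    using that \<open>z \<noteq> 0\<close> by (simp add: field_simps)
  have denom: "crit_denom \<beta> (of_real \<theta>) z =
      (1 + of_real \<theta> * z) * (1 + of_real (\<beta> * \<theta>) * z) * (z + of_real \<theta>)"
    by (simp add: crit_denom_def)
  show ?thesis
    unfolding norm_sq denom by (rule cancel) (use factors nonzero in auto)
qed

lemma f_crit_eq_crit_integral:
  assumes g: "\<And>\<omega>. complex_of_real (g \<omega>) = G (cis \<omega>)" and "\<bar>\<theta>\<bar> < 1" "\<beta> \<in> {0..1}"
  shows "f_crit g \<theta> \<beta> = \<i> * crit_integral \<beta> G 1 (of_real \<theta>)"
proof -
  have "crit_integral \<beta> G 1 (of_real \<theta>) =
      \<i> * integral {-pi..pi} (\<lambda>\<omega>. cis \<omega> * cis \<omega> / crit_denom \<beta> (of_real \<theta>) (cis \<omega>) * G (cis \<omega>))"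
    unfolding crit_integral_def contour_integral_circlepath_eq
    by (simp add: mult_ac flip: integral_mult_right)
  also have "\<dots> = - \<i> * f_crit g \<theta> \<beta>"
    unfolding f_crit_def g
    by (simp only: crit_weight_on_unit_circle[OF norm_cis assms(2,3)]) simp
  finally show ?thesis
    by simp
qed

lemma crit_integral_holomorphic:
  fixes G :: "complex \<Rightarrow> complex"
  assumes "\<beta> \<in> {0..1}" "0 \<le> \<rho>" and G: "continuous_on (sphere 0 \<rho>) G"
  shows "crit_integral \<beta> G \<rho> holomorphic_on {\<theta>. \<rho> * norm \<theta> < 1 \<and> norm \<theta> \<noteq> \<rho>}"
proof -
  define U where "U = {\<theta>::complex. \<rho> * norm \<theta> < 1 \<and> norm \<theta> \<noteq> \<rho>}"
  define D' where "D' \<theta> z = z * (1 + of_real \<beta> * \<theta> * z) * (z + \<theta>)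
      + of_real \<beta> * z * (1 + \<theta> * z) * (z + \<theta>) + (1 + \<theta> * z) * (1 + of_real \<beta> * \<theta> * z)"
    for \<theta> z :: complex
  have D': "((\<lambda>\<theta>. crit_denom \<beta> \<theta> z) has_field_derivative D' \<theta> z) (at \<theta>)" for \<theta> z
    unfolding crit_denom_def D'_def by (rule derivative_eq_intros refl)+ (simp add: algebra_simps)
  have "open U"
    unfolding U_def by (intro open_Collect_conj open_Collect_less open_Collect_neq continuous_intros)
  have nonzero: "crit_denom \<beta> \<theta> z \<noteq> 0" if "\<theta> \<in> U" "z \<in> sphere 0 \<rho>" for \<theta> z
    using that by (intro crit_denom_nonzero[OF assms(1)]) (auto simp: U_def mult.commute)
  have G_snd: "continuous_on (U \<times> sphere 0 \<rho>) (\<lambda>p. G (snd p))"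
    by (rule continuous_on_compose2[OF G continuous_on_snd]) auto
  have denom: "continuous_on (U \<times> sphere 0 \<rho>) (\<lambda>p. crit_denom \<beta> (fst p) (snd p))"
    unfolding crit_denom_def by (intro continuous_intros)
  show ?thesis
    unfolding crit_integral_def U_def[symmetric]
  proof (rule holomorphic_on_contour_integral_circlepath_param[OF \<open>open U\<close> \<open>0 \<le> \<rho>\<close>,
        where F' = "\<lambda>\<theta> z. - (z * G z) * D' \<theta> z / (crit_denom \<beta> \<theta> z)\<^sup>2"])
    fix \<theta> z :: complex assume "\<theta> \<in> U" "z \<in> sphere 0 \<rho>"
    then show "((\<lambda>\<theta>. z * G z / crit_denom \<beta> \<theta> z) has_field_derivative
        - (z * G z) * D' \<theta> z / (crit_denom \<beta> \<theta> z)\<^sup>2) (at \<theta>)"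
      using nonzero by (auto intro!: derivative_eq_intros D' simp: power2_eq_square)
  next
    show "continuous_on (U \<times> sphere 0 \<rho>) (\<lambda>(\<theta>, z). z * G z / crit_denom \<beta> \<theta> z)"
      using G_snd denom nonzero by (auto simp: case_prod_beta intro!: continuous_intros)
    show "continuous_on (U \<times> sphere 0 \<rho>) (\<lambda>(\<theta>, z). - (z * G z) * D' \<theta> z / (crit_denom \<beta> \<theta> z)\<^sup>2)"
      using G_snd denom nonzero unfolding D'_def by (auto simp: case_prod_beta intro!: continuous_intros)
  qed
qed

lemma crit_integral_jump:
  fixes G :: "complex \<Rightarrow> complex"
  assumes "\<beta> \<in> {0..1}" and G: "G holomorphic_on ball 0 R - S" and S: "finite S" "S \<subseteq> ball 0 \<rho>\<^sub>2"
    and radii: "0 \<le> \<rho>\<^sub>2" "\<rho>\<^sub>2 < norm \<theta>" "norm \<theta> < \<rho>\<^sub>1" "\<rho>\<^sub>1 < R" "\<rho>\<^sub>1 * norm \<theta> < 1"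
  shows "crit_integral \<beta> G \<rho>\<^sub>1 \<theta> - crit_integral \<beta> G \<rho>\<^sub>2 \<theta> =
    - 2 * pi * \<i> * \<theta> * G (-\<theta>) / ((1 - \<theta>\<^sup>2) * (1 - of_real \<beta> * \<theta>\<^sup>2))"
proof -
  define R' where "R' = min R (1 / norm \<theta>)"
  define N where "N z = z * G z / ((1 + \<theta> * z) * (1 + of_real \<beta> * \<theta> * z))" for z
  have "\<theta> \<noteq> 0"
    using radii by auto
  have "\<rho>\<^sub>1 < R'"
    using radii \<open>\<theta> \<noteq> 0\<close> by (simp add: R'_def field_simps)
  have "norm \<theta> * norm z < 1" if "z \<in> ball 0 R'" for z
    using that \<open>\<theta> \<noteq> 0\<close> by (simp add: R'_def field_simps)
  then have N_hol: "N holomorphic_on ball 0 R' - S"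
    unfolding N_def using crit_denom_factors_nonzero[OF \<open>\<beta> \<in> {0..1}\<close>]
    by (intro holomorphic_intros holomorphic_on_subset[OF G]) (auto simp: R'_def)
  have f_eq: "(\<lambda>z. z * G z / crit_denom \<beta> \<theta> z) = (\<lambda>z. N z / (z - (-\<theta>)))"
    by (simp add: fun_eq_iff N_def crit_denom_def)
  have "(\<lambda>z. z * G z / crit_denom \<beta> \<theta> z) holomorphic_on ball 0 R' - insert (-\<theta>) S"
    unfolding f_eq by (intro holomorphic_intros holomorphic_on_subset[OF N_hol]) (auto simp: add_eq_0_iff2)
  then have "crit_integral \<beta> G \<rho>\<^sub>1 \<theta> - crit_integral \<beta> G \<rho>\<^sub>2 \<theta> =
      2 * pi * \<i> * residue (\<lambda>z. z * G z / crit_denom \<beta> \<theta> z) (-\<theta>)"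
    unfolding crit_integral_def
    using S radii \<open>\<rho>\<^sub>1 < R'\<close> by (intro contour_integral_circlepath_diff_residue[where R = R']) auto
  also have "residue (\<lambda>z. z * G z / crit_denom \<beta> \<theta> z) (-\<theta>) = N (-\<theta>)"
    unfolding f_eq using S radii \<open>\<rho>\<^sub>1 < R'\<close>
    by (intro residue_simple[OF _ _ N_hol]) (auto intro: finite_imp_closed)
  finally show ?thesis
    by (simp add: N_def power2_eq_square mult.assoc)
qed

lemma crit_integral_eventually_nonzero:
  fixes G :: "complex \<Rightarrow> complex"
  assumes "\<beta> \<in> {0..1}" and G: "G holomorphic_on ball 0 R - S" and S: "finite S" "S \<subseteq> cball 0 r"
    and radii: "r < 1" "1 < R" and c: "c\<^sup>2 = 1" "G (-c) \<noteq> 0"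
  shows "eventually (\<lambda>\<theta>. crit_integral \<beta> G 1 \<theta> \<noteq> 0) (at c within ball 0 1)"
proof -
  define s where "s = (1 + max r 0) / 2"
  have s: "0 < s" "r < s" "s < 1"
    using radii by (auto simp: s_def)
  have "norm c = 1"
    using c(1) by (auto simp: power2_eq_1_iff)
  have "open (ball 0 R - S)"
    using S by (auto intro: finite_imp_closed)
  have "-c \<in> ball 0 R - S" "sphere 0 s \<subseteq> ball 0 R - S"
    using S s radii \<open>norm c = 1\<close> by fastforce+
  then have "isCont G (-c)" "continuous_on (sphere 0 s) G"
    using G \<open>open (ball 0 R - S)\<close>
    by (auto simp: continuous_on_eq_continuous_at dest!: holomorphic_on_imp_continuous_on
        intro: continuous_on_subset)
  have "isCont (crit_integral \<beta> G s) c"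
  proof -
    have "open {\<theta>::complex. s * norm \<theta> < 1 \<and> norm \<theta> \<noteq> s}"
      by (intro open_Collect_conj open_Collect_less open_Collect_neq continuous_intros)
    moreover have "c \<in> {\<theta>. s * norm \<theta> < 1 \<and> norm \<theta> \<noteq> s}"
      using s \<open>norm c = 1\<close> by auto
    ultimately show ?thesis
      using crit_integral_holomorphic[OF \<open>\<beta> \<in> {0..1}\<close> _ \<open>continuous_on (sphere 0 s) G\<close>] s
      by (metis continuous_on_eq_continuous_at holomorphic_on_imp_continuous_on less_imp_le)
  qed
  \<comment> \<open>\<open>W\<close> agrees with \<open>(1 - \<theta>\<^sup>2)(1 - \<beta>\<theta>\<^sup>2) \<Psi>(\<theta>)\<close> for \<open>s < |\<theta>| < 1\<close> and is continuous at \<open>c\<close>.\<close>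
  define W where "W \<theta> = (1 - \<theta>\<^sup>2) * (1 - of_real \<beta> * \<theta>\<^sup>2) * crit_integral \<beta> G s \<theta>
      - 2 * pi * \<i> * \<theta> * G (-\<theta>)" for \<theta>
  have "isCont W c"
    unfolding W_def using \<open>isCont G (-c)\<close> \<open>isCont (crit_integral \<beta> G s) c\<close>
    by (intro continuous_intros isCont_o2[where f = uminus and g = G]) auto
  moreover have "W c \<noteq> 0"
    using c \<open>norm c = 1\<close> by (auto simp: W_def)
  ultimately have "eventually (\<lambda>\<theta>. W \<theta> \<noteq> 0) (at c)"
    by (simp add: isCont_def tendsto_imp_eventually_ne)
  moreover have "eventually (\<lambda>\<theta>. s < norm \<theta>) (at c)"
    using s \<open>norm c = 1\<close> by (intro order_tendstoD tendsto_eq_intros) auto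
  ultimately have "eventually (\<lambda>\<theta>. \<theta> \<in> ball 0 1 \<longrightarrow> crit_integral \<beta> G 1 \<theta> \<noteq> 0) (at c)"
  proof eventually_elim
    case (elim \<theta>)
    show ?case
    proof
      assume "\<theta> \<in> ball 0 1"
      then have "norm \<theta> * norm (-\<theta>) < 1"
        by (simp add: abs_square_less_1 power2_eq_square[symmetric])
      from crit_denom_factors_nonzero[OF \<open>\<beta> \<in> {0..1}\<close> this]
      have "(1 - \<theta>\<^sup>2) * (1 - of_real \<beta> * \<theta>\<^sup>2) \<noteq> 0"
        by (simp add: power2_eq_square mult.assoc)
      moreover have "crit_integral \<beta> G 1 \<theta> - crit_integral \<beta> G s \<theta> =
          - 2 * pi * \<i> * \<theta> * G (-\<theta>) / ((1 - \<theta>\<^sup>2) * (1 - of_real \<beta> * \<theta>\<^sup>2))"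
        using S s radii elim \<open>\<theta> \<in> ball 0 1\<close>
        by (intro crit_integral_jump[OF \<open>\<beta> \<in> {0..1}\<close> G]) auto
      ultimately have "(1 - \<theta>\<^sup>2) * (1 - of_real \<beta> * \<theta>\<^sup>2) * crit_integral \<beta> G 1 \<theta> = W \<theta>"
        by (simp add: W_def field_simps)
      with elim show "crit_integral \<beta> G 1 \<theta> \<noteq> 0"
        by auto
    qed
  qed
  then show ?thesis
    unfolding eventually_at_filter by (simp add: eventually_nhds)
qed

theorem finite_real_zeros_crit_integral:
  fixes G :: "complex \<Rightarrow> complex"
  assumes "\<beta> \<in> {0..1}" and G: "G holomorphic_on ball 0 R - S" and S: "finite S" "S \<subseteq> cball 0 r"
    and radii: "r < 1" "1 < R" and "G 1 \<noteq> 0" "G (-1) \<noteq> 0"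
  shows "finite {x \<in> {-1<..<1}. crit_integral \<beta> G 1 (of_real x) = 0}"
proof (rule finite_real_zeros_in_unit_disc)
  have "continuous_on (sphere 0 1) G"
    using S radii by (intro holomorphic_on_imp_continuous_on holomorphic_on_subset[OF G]) fastforce
  from crit_integral_holomorphic[OF \<open>\<beta> \<in> {0..1}\<close> _ this]
  show "crit_integral \<beta> G 1 holomorphic_on ball 0 1"
    by (rule holomorphic_on_subset) auto
  show "eventually (\<lambda>\<theta>. crit_integral \<beta> G 1 \<theta> \<noteq> 0) (at 1 within ball 0 1)"
    using \<open>G (-1) \<noteq> 0\<close> by (intro crit_integral_eventually_nonzero[OF \<open>\<beta> \<in> {0..1}\<close> G S radii]) auto
  show "eventually (\<lambda>\<theta>. crit_integral \<beta> G 1 \<theta> \<noteq> 0) (at (-1) within ball 0 1)"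
    using \<open>G 1 \<noteq> 0\<close> by (intro crit_integral_eventually_nonzero[OF \<open>\<beta> \<in> {0..1}\<close> G S radii]) auto
qed


section \<open>ARMA spectral densities\<close>

lemma poly_nonzero_on_larger_disc:
  fixes p :: "complex poly"
  assumes roots: "\<And>z. poly p z = 0 \<Longrightarrow> 1 < norm z"
  obtains m where "1 < m" "\<And>z. norm z < m \<Longrightarrow> poly p z \<noteq> 0"
proof
  have "p \<noteq> 0"
    using roots[of 0] by auto
  then have fin: "finite (norm ` {z. poly p z = 0})"
    by (simp add: poly_roots_finite)
  define m where "m = Min (insert 2 (norm ` {z. poly p z = 0}))"
  show "1 < m"
    using fin roots by (auto simp: m_def)
  show "poly p z \<noteq> 0" if "norm z < m" for z
    using that fin by (auto simp: m_def)
qed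

definition arma_spec_ext :: "real \<Rightarrow> real poly \<Rightarrow> real poly \<Rightarrow> complex \<Rightarrow> complex" where
  "arma_spec_ext s2 eta phi z = of_real (s2 / (2 * pi)) * arma_kappa eta phi z * arma_kappa eta phi (1 / z)"

lemma cnj_arma_kappa: "cnj (arma_kappa eta phi z) = arma_kappa eta phi (cnj z)"
  by (simp add: arma_kappa_def poly_cnj_real coeff_map_poly)

lemma arma_spec_eq_spec_ext_cis:
  "complex_of_real (arma_spec s2 eta phi \<omega>) = arma_spec_ext s2 eta phi (cis \<omega>)"
proof -
  have "cnj (cis \<omega>) = 1 / cis \<omega>"
    by (simp add: cis_cnj divide_inverse flip: cis_inverse)
  then have "complex_of_real ((cmod (arma_kappa eta phi (cis \<omega>)))\<^sup>2) =
      arma_kappa eta phi (cis \<omega>) * arma_kappa eta phi (1 / cis \<omega>)"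
    by (simp only: complex_norm_square cnj_arma_kappa)
  then show ?thesis
    by (simp add: arma_spec_def arma_spec_ext_def mult.assoc)
qed

lemma arma_spec_ext_nonzero_on_unit_circle:
  assumes "invertible_arma s2 eta phi" "norm z = 1"
  shows "arma_spec_ext s2 eta phi z \<noteq> 0"
  using assms by (force simp: invertible_arma_def arma_spec_ext_def arma_kappa_def norm_divide)

lemma arma_spec_ext_holomorphic:
  assumes "invertible_arma s2 eta phi"
  obtains m S where "1 < m" "finite S" "S \<subseteq> cball 0 (1 / m)"
    "arma_spec_ext s2 eta phi holomorphic_on ball 0 m - S"
proof -
  define P where "P = map_poly complex_of_real phi"
  obtain m where m: "1 < m" "\<And>z. norm z < m \<Longrightarrow> poly P z \<noteq> 0"
    using assms poly_nonzero_on_larger_disc[of P] by (auto simp: invertible_arma_def P_def)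
  define S where "S = insert 0 {z. poly P (1 / z) = 0}"
  have "{z. poly P (1 / z) = 0} \<subseteq> inverse ` {w. poly P w = 0}"
    by (auto simp: divide_inverse intro!: image_eqI[where x = "inverse _"])
  moreover have "P \<noteq> 0"
    using m(1) m(2)[of 0] by auto
  ultimately have "finite S"
    unfolding S_def by (metis finite_imageI finite_insert finite_subset poly_roots_finite)
  moreover have "S \<subseteq> cball 0 (1 / m)"
  proof
    fix z assume "z \<in> S"
    moreover have "m * norm z \<le> 1" if "poly P (1 / z) = 0"
    proof -
      have "m \<le> norm (1 / z)"
        using m(2)[of "1 / z"] that by force
      with that \<open>1 < m\<close> show ?thesis
        by (cases "z = 0") (auto simp: norm_divide field_simps)
    qed
    ultimately show "z \<in> cball 0 (1 / m)"
      using \<open>1 < m\<close> by (auto simp: S_def field_simps)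
  qed
  moreover have "arma_spec_ext s2 eta phi holomorphic_on ball 0 m - S"
    unfolding arma_spec_ext_def arma_kappa_def P_def[symmetric]
    using m by (intro holomorphic_intros) (auto simp: S_def)
  ultimately show ?thesis
    using m that by blast
qed

theorem proposition4p5:
  fixes s2 :: real and eta phi :: "real poly" and \<beta> :: real
  assumes "invertible_arma s2 eta phi"
    and "\<beta> \<in> {0..1}"
  shows "finite {\<theta> \<in> {-1<..<1}. f_crit (arma_spec s2 eta phi) \<theta> \<beta> = 0}"
proof -
  obtain m S where "1 < m" "finite S" "S \<subseteq> cball 0 (1 / m)"
    and hol: "arma_spec_ext s2 eta phi holomorphic_on ball 0 m - S"
    using arma_spec_ext_holomorphic[OF assms(1)] .
  have "f_crit (arma_spec s2 eta phi) \<theta> \<beta> =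
      \<i> * crit_integral \<beta> (arma_spec_ext s2 eta phi) 1 (of_real \<theta>)"
    if "\<theta> \<in> {-1<..<1}" for \<theta>
    using that assms(2) by (intro f_crit_eq_crit_integral arma_spec_eq_spec_ext_cis) auto
  then have "{\<theta> \<in> {-1<..<1}. f_crit (arma_spec s2 eta phi) \<theta> \<beta> = 0} =
      {\<theta> \<in> {-1<..<1}. crit_integral \<beta> (arma_spec_ext s2 eta phi) 1 (of_real \<theta>) = 0}"
    by auto
  also have "finite \<dots>"
    using \<open>1 < m\<close> \<open>finite S\<close> \<open>S \<subseteq> cball 0 (1 / m)\<close>
      arma_spec_ext_nonzero_on_unit_circle[OF assms(1)]
    by (intro finite_real_zeros_crit_integral[OF assms(2) hol]) auto
  finally show ?thesis .
qed

end
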